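(* Consider the following bit commitment protocol: (commit) the committer chooses a bit $b$ and, before splitting into two agents Bob and Brian, shares it between them; (open) Bob and Brian, who cannot communicate with each other during the open phase, independently send Alice bits $x$ and $y$, respectively; (verify) Alice accepts the commitment of $b$ iff $b=x=y$. In the local command model, a dishonest Bob and Brian may prepare any shared resources before the split; in the open phase an external command $b\in\{0,1\}$ is given to Bob only, Bob's behaviour may depend on $b$, while Brian's behaviour is independent of $b$, and the joint distribution of $(x,y)$ given their respective strategies satisfies no-signalling between Bob and Brian. Let $p_b$ denote the probability that Alice accepts (i.e. $x=y=b$) when the command is $b$. Then for every such cheating strategy, $p_0+p_1\le 1$; i.e. the protocol is $\varepsilon$-weakly binding with $\varepsilon=0$ in the local command model.
   Context: A protocol is $\varepsilon$-weakly binding if for all cheating strategies allowed by the model, $p_0+p_1\le 1+\varepsilon$, where $p_b$ is the probability that Alice accepts an opening of $b$. *)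

theory Defs
  imports "HOL-Probability.Probability_Mass_Function"
begin

text \<open>Bits are modelled as bool (False = 0, True = 1).
  A cheating strategy in the local command model is described by its behaviour:
  for each command b (given to Bob only), a joint distribution S b on (x, y),
  where x is Bob's bit and y is Brian's bit.\<close>

type_synonym strategy = "bool \<Rightarrow> (bool \<times> bool) pmf"

text \<open>No-signalling between Bob and Brian: Brian has no input, so his marginal
  distribution of y must not depend on Bob's command b.\<close>
definition no_signalling :: "strategy \<Rightarrow> bool" where
  "no_signalling S \<longleftrightarrow> (\<forall>b b'. map_pmf snd (S b) = map_pmf snd (S b'))"

definition accept_prob :: "strategy \<Rightarrow> bool \<Rightarrow> real" where
  "accept_prob S b = measure_pmf.prob (S b) {(x, y). x = b \<and> y = b}"

end

theory Submission
  imports Defs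
begin

text \<open>Alice accepts an opening of b only if Brian's bit is b. Brian's bit has the same
  distribution under both commands by no-signalling, and it cannot equal both 0 and 1,
  so the two acceptance probabilities are bounded by complementary probabilities of a
  single distribution.\<close>

lemma prob_diagonal_le_prob_snd:
  fixes p :: "('a \<times> 'a) pmf"
  shows "measure_pmf.prob p {(x, y). x = b \<and> y = b} \<le> measure_pmf.prob (map_pmf snd p) {b}"
proof -
  have "measure_pmf.prob p {(x, y). x = b \<and> y = b} \<le> measure_pmf.prob p (snd -` {b})"
    by (rule measure_pmf.finite_measure_mono) auto
  then show ?thesis by (simp add: measure_map_pmf)
qed

lemma prob_False_plus_prob_True:
  fixes q :: "bool pmf"
  shows "measure_pmf.prob q {False} + measure_pmf.prob q {True} = 1"
proof -
  have "measure_pmf.prob q {False} + measure_pmf.prob q {True} = measure_pmf.prob q ({False} \<union> {True})"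
    by (subst measure_pmf.finite_measure_Union) auto
  also have "{False} \<union> {True} = UNIV" by auto
  finally show ?thesis by simp
qed

theorem lemma3:
  fixes S :: strategy
  assumes "no_signalling S"
  shows "accept_prob S False + accept_prob S True \<le> 1"
proof -
  let ?brian = "map_pmf snd (S False)"
  have brian_True: "map_pmf snd (S True) = ?brian"
    using assms unfolding no_signalling_def by blast
  have "accept_prob S False + accept_prob S True
        \<le> measure_pmf.prob ?brian {False} + measure_pmf.prob ?brian {True}"
    using prob_diagonal_le_prob_snd[of "S False" False] prob_diagonal_le_prob_snd[of "S True" True]
    unfolding accept_prob_def brian_True by linarith
  then show ?thesis unfolding prob_False_plus_prob_True .
qed

end
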